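(* Let $U$ be a $p$-qubit unitary, $\mathcal{C}$ a quantum code, and $\mathcal{F}$ a family of circuits closed under composition. Then $U$ is $\mathcal{F}$-addressable on $\mathcal{C}$ if and only if $U$ is $\mathcal{F}$-parallel addressable on $\mathcal{C}$.
   Context: Fix logical Pauli operators for the $k$ logical qubits of $\mathcal{C}$, so that each logical operator (unitary preserving the codespace) has a well-defined logical action. $U$ is $\mathcal{F}$-addressable on $\mathcal{C}$ if for every ordered $p$-tuple $t$ of logical qubits there is a circuit in $\mathcal{F}$ that is a logical operator with logical action $\bar U$ on $t$ (and identity on the other logical qubits). $U$ is $\mathcal{F}$-parallel addressable on $\mathcal{C}$ if for every set $I$ of pairwise disjoint ordered $p$-tuples of logical qubits there is a circuit in $\mathcal{F}$ that is a logical operator with logical action $\bar U$ applied to every tuple in $I$ (and identity on the other logical qubits). *)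

theory Defs
  imports Complex_Main "Jordan_Normal_Form.Matrix"
begin

definition dagger :: "complex mat \<Rightarrow> complex mat" where
  "dagger A = mat (dim_col A) (dim_row A) (\<lambda>(i,j). cnj (A $$ (j,i)))"

definition unitary_mat :: "nat \<Rightarrow> complex mat \<Rightarrow> bool" where
  "unitary_mat d V \<longleftrightarrow> V \<in> carrier_mat d d \<and> dagger V * V = 1\<^sub>m d \<and> V * dagger V = 1\<^sub>m d"

text \<open>A quantum code with n physical and k logical qubits, with fixed logical
  basis (equivalently, fixed logical Pauli operators), is given by its encoding
  isometry E : (C^2)^k -> (C^2)^n; the codespace is the range of E.\<close>
definition code :: "nat \<Rightarrow> nat \<Rightarrow> complex mat \<Rightarrow> bool" where
  "code n k E \<longleftrightarrow> E \<in> carrier_mat (2^n) (2^k) \<and> dagger E * E = 1\<^sub>m (2^k)"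

definition logical_op :: "nat \<Rightarrow> nat \<Rightarrow> complex mat \<Rightarrow> complex mat \<Rightarrow> bool" where
  "logical_op n k E V \<longleftrightarrow> unitary_mat (2^n) V \<and>
     (\<forall>v \<in> carrier_vec (2^k). \<exists>w \<in> carrier_vec (2^k). V *\<^sub>v (E *\<^sub>v v) = E *\<^sub>v w)"

text \<open>Logical action of a logical operator V (the unique L with V E = E L).\<close>
definition logical_action :: "complex mat \<Rightarrow> complex mat \<Rightarrow> complex mat" where
  "logical_action E V = dagger E * V * E"

definition qbit :: "nat \<Rightarrow> nat \<Rightarrow> nat" where
  "qbit i j = (i div 2^j) mod 2"

text \<open>Index of the restriction of basis state i to the ordered tuple t
  (the m-th entry of t is the m-th qubit of the p-qubit register).\<close>
definition restr :: "nat list \<Rightarrow> nat \<Rightarrow> nat" where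
  "restr t i = (\<Sum>m<length t. qbit i (t ! m) * 2^m)"

definition tuple :: "nat \<Rightarrow> nat \<Rightarrow> nat list \<Rightarrow> bool" where
  "tuple k p t \<longleftrightarrow> length t = p \<and> distinct t \<and> set t \<subseteq> {..<k}"

definition pairwise_disjoint_tuples :: "nat list set \<Rightarrow> bool" where
  "pairwise_disjoint_tuples I \<longleftrightarrow>
     (\<forall>t\<in>I. \<forall>t'\<in>I. t \<noteq> t' \<longrightarrow> set t \<inter> set t' = {})"

text \<open>The k-qubit operator applying the p-qubit unitary U to every tuple in the
  set I of pairwise disjoint tuples, and identity on all other qubits.\<close>
definition apply_on :: "nat \<Rightarrow> nat list set \<Rightarrow> complex mat \<Rightarrow> complex mat" where
  "apply_on k I U = mat (2^k) (2^k) (\<lambda>(i,i').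
     if (\<forall>j<k. j \<notin> (\<Union>t\<in>I. set t) \<longrightarrow> qbit i j = qbit i' j)
     then (\<Prod>t\<in>I. U $$ (restr t i, restr t i')) else 0)"

text \<open>Family of circuits (identified with the unitaries they implement) closed
  under composition.\<close>
definition closed_comp :: "complex mat set \<Rightarrow> bool" where
  "closed_comp F \<longleftrightarrow> (\<forall>A\<in>F. \<forall>B\<in>F. B * A \<in> F)"

definition addressable :: "nat \<Rightarrow> nat \<Rightarrow> complex mat \<Rightarrow> complex mat set \<Rightarrow> nat \<Rightarrow> complex mat \<Rightarrow> bool" where
  "addressable n k E F p U \<longleftrightarrow>
     (\<forall>t. tuple k p t \<longrightarrow>
        (\<exists>V\<in>F. logical_op n k E V \<and> logical_action E V = apply_on k {t} U))"

definition parallel_addressable :: "nat \<Rightarrow> nat \<Rightarrow> complex mat \<Rightarrow> complex mat set \<Rightarrow> nat \<Rightarrow> complex mat \<Rightarrow> bool" where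
  "parallel_addressable n k E F p U \<longleftrightarrow>
     (\<forall>I. I \<noteq> {} \<and> (\<forall>t\<in>I. tuple k p t) \<and> pairwise_disjoint_tuples I \<longrightarrow>
        (\<exists>V\<in>F. logical_op n k E V \<and> logical_action E V = apply_on k I U))"

end

theory Submission
  imports Defs
begin

text \<open>Parallel addressability gives addressability by taking I = {t}. Conversely, apply_on is
  multiplicative on disjoint unions of tuple sets: in the matrix product only one intermediate
  basis state contributes, namely the one that agrees with the input state on the support of the
  left factor and with the output state elsewhere. Logical operators are closed under products
  and their logical action is multiplicative, since a logical operator V satisfies V E = E L for
  its logical action L. Hence composing the circuits for the finitely many single tuples of I,
  which stays in F, realises the action on all of I.\<close>

lemma qbit_eq_bit: "qbit i j = of_bool (bit i j)"
  unfolding qbit_def by (simp add: bit_iff_odd odd_iff_mod_2_eq_one)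

lemma eq_if_qbits_eq:
  assumes "i < 2^k" and "l < 2^k" and "\<And>j. j < k \<Longrightarrow> qbit i j = qbit l j"
  shows "i = (l::nat)"
proof (rule bit_eqI)
  fix j
  show "bit i j = bit l j"
  proof (cases "j < k")
    case True
    then show ?thesis using assms(3)[of j] by (cases "bit i j"; cases "bit l j") (simp_all add: qbit_eq_bit)
  next
    case False
    then show ?thesis using assms(1,2) by (metis bit_take_bit_iff take_bit_nat_eq_self)
  qed
qed

lemma ex_qbit_splice:
  "\<exists>l<(2::nat)^k. \<forall>j<k. qbit l j = (if j \<in> S then qbit a j else qbit b j)"
proof -
  define bs where "bs = map (\<lambda>j. if j \<in> S then bit a j else bit b j) [0..<k]"
  have "horner_sum of_bool 2 bs < (2::nat)^k"
    using horner_sum_of_bool_2_less[of bs] by (simp add: bs_def)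
  moreover have "\<forall>j<k. qbit (horner_sum of_bool 2 bs) j = (if j \<in> S then qbit a j else qbit b j)"
    by (simp add: bs_def qbit_eq_bit bit_horner_sum_bit_iff)
  ultimately show ?thesis by blast
qed

lemma restr_cong: "(\<And>j. j \<in> set t \<Longrightarrow> qbit i j = qbit i' j) \<Longrightarrow> restr t i = restr t i'"
  unfolding restr_def by (intro sum.cong) auto

lemma apply_on_index:
  assumes "i < 2^k" and "i' < 2^k"
  shows "apply_on k I U $$ (i, i') =
    (if \<forall>j<k. j \<notin> \<Union>(set ` I) \<longrightarrow> qbit i j = qbit i' j
     then \<Prod>t\<in>I. U $$ (restr t i, restr t i') else 0)"
  using assms by (simp add: apply_on_def)

lemma apply_on_mult:
  assumes "finite I" and "finite J" and "I \<inter> J = {}"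
    and disjoint: "\<Union>(set ` I) \<inter> \<Union>(set ` J) = {}"
    and "\<Union>(set ` I) \<subseteq> {..<k}" and "\<Union>(set ` J) \<subseteq> {..<k}"
  shows "apply_on k I U * apply_on k J U = apply_on k (I \<union> J) U"
proof (rule eq_matI)
  fix i i' assume "i < dim_row (apply_on k (I \<union> J) U)" "i' < dim_col (apply_on k (I \<union> J) U)"
  then have i: "i < 2^k" and i': "i' < 2^k" by (simp_all add: apply_on_def)
  let ?X = "apply_on k I U" and ?Y = "apply_on k J U"
  define SI SJ where "SI = \<Union>(set ` I)" and "SJ = \<Union>(set ` J)"
  have SI_k: "SI \<subseteq> {..<k}" and SJ_k: "SJ \<subseteq> {..<k}" using assms(5,6) by (simp_all add: SI_def SJ_def)
  obtain l0 where l0: "l0 < 2^k"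
    and l0_qbit: "\<forall>j<k. qbit l0 j = (if j \<in> SI then qbit i' j else qbit i j)"
    using ex_qbit_splice by blast
  have only_l0: "?X $$ (i, l) * ?Y $$ (l, i') = 0" if "l < 2^k" and "l \<noteq> l0" for l
  proof (rule ccontr)
    assume "?X $$ (i, l) * ?Y $$ (l, i') \<noteq> 0"
    then have outside_SI: "\<forall>j<k. j \<notin> SI \<longrightarrow> qbit i j = qbit l j"
      and outside_SJ: "\<forall>j<k. j \<notin> SJ \<longrightarrow> qbit l j = qbit i' j"
      using i i' \<open>l < 2^k\<close> by (auto simp: apply_on_index SI_def SJ_def split: if_splits)
    have "qbit l j = qbit l0 j" if "j < k" for j
    proof (cases "j \<in> SI")
      case True
      then have "j \<notin> SJ" using disjoint by (auto simp: SI_def SJ_def)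
      then show ?thesis using True \<open>j < k\<close> outside_SJ l0_qbit by simp
    next
      case False
      then show ?thesis using \<open>j < k\<close> outside_SI l0_qbit by simp
    qed
    then have "l = l0" using eq_if_qbits_eq[OF \<open>l < 2^k\<close> l0] by blast
    with \<open>l \<noteq> l0\<close> show False ..
  qed
  have "(?X * ?Y) $$ (i, i') = (\<Sum>l\<in>{0..<2^k}. ?X $$ (i, l) * ?Y $$ (l, i'))"
    using i i' by (simp add: apply_on_def scalar_prod_def)
  also have "\<dots> = ?X $$ (i, l0) * ?Y $$ (l0, i')"
    using only_l0 l0 by (subst sum.mono_neutral_right[where S="{l0}"]) auto
  also have "?X $$ (i, l0) = (\<Prod>t\<in>I. U $$ (restr t i, restr t i'))"
  proof -
    have "restr t l0 = restr t i'" if "t \<in> I" for t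
    proof (rule restr_cong)
      fix j assume "j \<in> set t"
      with that have "j \<in> SI" by (auto simp: SI_def)
      with SI_k show "qbit l0 j = qbit i' j" using l0_qbit by auto
    qed
    then show ?thesis using i l0 l0_qbit by (simp add: apply_on_index SI_def)
  qed
  also have "?Y $$ (l0, i') = (if \<forall>j<k. j \<notin> SI \<union> SJ \<longrightarrow> qbit i j = qbit i' j
      then \<Prod>s\<in>J. U $$ (restr s i, restr s i') else 0)"
  proof -
    have "restr s l0 = restr s i" if "s \<in> J" for s
    proof (rule restr_cong)
      fix j assume "j \<in> set s"
      with that have "j \<in> SJ" by (auto simp: SJ_def)
      moreover have "SI \<inter> SJ = {}" using disjoint by (simp add: SI_def SJ_def)
      ultimately have "j < k" "j \<notin> SI" using SJ_k by auto
      then show "qbit l0 j = qbit i j" using l0_qbit by simp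
    qed
    moreover have "(\<forall>j<k. j \<notin> SJ \<longrightarrow> qbit l0 j = qbit i' j) \<longleftrightarrow> (\<forall>j<k. j \<notin> SI \<union> SJ \<longrightarrow> qbit i j = qbit i' j)"
      using l0_qbit disjoint by (auto simp: SI_def SJ_def)
    ultimately show ?thesis using i' l0 by (simp add: apply_on_index SJ_def cong: if_cong)
  qed
  also have "(\<Prod>t\<in>I. U $$ (restr t i, restr t i')) * \<dots> = apply_on k (I \<union> J) U $$ (i, i')"
  proof -
    have support: "\<Union>(set ` (I \<union> J)) = SI \<union> SJ" by (simp add: SI_def SJ_def)
    have prod: "(\<Prod>t\<in>I \<union> J. U $$ (restr t i, restr t i')) =
        (\<Prod>t\<in>I. U $$ (restr t i, restr t i')) * (\<Prod>t\<in>J. U $$ (restr t i, restr t i'))"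
      using assms(1-3) by (rule prod.union_disjoint)
    show ?thesis unfolding apply_on_index[OF i i'] support prod by auto
  qed
  finally show "(?X * ?Y) $$ (i, i') = apply_on k (I \<union> J) U $$ (i, i')" .
qed (simp_all add: apply_on_def)

lemma dagger_carrier [simp]: "A \<in> carrier_mat r c \<Longrightarrow> dagger A \<in> carrier_mat c r"
  unfolding dagger_def by auto

lemma dagger_mult:
  assumes A: "A \<in> carrier_mat a b" and B: "B \<in> carrier_mat b c"
  shows "dagger (A * B) = dagger B * dagger A"
proof (rule eq_matI)
  fix i j assume "i < dim_row (dagger B * dagger A)" "j < dim_col (dagger B * dagger A)"
  then have "i < c" "j < a" using A B by (auto simp: dagger_def)
  then show "dagger (A * B) $$ (i, j) = (dagger B * dagger A) $$ (i, j)"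
    using A B by (auto simp: dagger_def scalar_prod_def mult.commute intro!: sum.cong)
qed (use A B in \<open>auto simp: dagger_def\<close>)

lemma unitary_mat_mult:
  assumes uA: "unitary_mat d A" and uB: "unitary_mat d B"
  shows "unitary_mat d (B * A)"
proof -
  have A: "A \<in> carrier_mat d d" and B: "B \<in> carrier_mat d d"
    using assms by (simp_all add: unitary_mat_def)
  have dA: "dagger A \<in> carrier_mat d d" and dB: "dagger B \<in> carrier_mat d d"
    using A B by simp_all
  have "dagger (B * A) * (B * A) = dagger A * ((dagger B * B) * A)"
    using A B dA dB by (simp add: dagger_mult[OF B A] assoc_mult_mat[of _ d d _ d _ d])
  also have "\<dots> = 1\<^sub>m d" using uA uB A by (simp add: unitary_mat_def)
  finally have left: "dagger (B * A) * (B * A) = 1\<^sub>m d" .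
  have "(B * A) * dagger (B * A) = B * ((A * dagger A) * dagger B)"
    unfolding dagger_mult[OF B A]
    using assoc_mult_mat[OF B A mult_carrier_mat[OF dA dB]] assoc_mult_mat[OF A dA dB] by simp
  also have "\<dots> = 1\<^sub>m d" using uA uB by (simp add: unitary_mat_def left_mult_one_mat[OF dB])
  finally have right: "(B * A) * dagger (B * A) = 1\<^sub>m d" .
  from left right A B show ?thesis by (simp add: unitary_mat_def)
qed

lemma logical_op_carrier: "logical_op n k E V \<Longrightarrow> V \<in> carrier_mat (2^n) (2^n)"
  by (simp add: logical_op_def unitary_mat_def)

lemma logical_op_factor:
  assumes E: "E \<in> carrier_mat (2^n) (2^k)" and V: "logical_op n k E V"
  obtains W where "W \<in> carrier_mat (2^k) (2^k)" and "V * E = E * W"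
proof -
  have "\<forall>j<2^k. \<exists>w\<in>carrier_vec (2^k). V *\<^sub>v col E j = E *\<^sub>v w"
  proof (intro allI impI)
    fix j :: nat assume "j < 2^k"
    then have "col E j = E *\<^sub>v unit_vec (2^k) j"
      using E col_mult2[OF E one_carrier_mat, of j] by simp
    then show "\<exists>w\<in>carrier_vec (2^k). V *\<^sub>v col E j = E *\<^sub>v w"
      using V by (simp add: logical_op_def)
  qed
  then obtain w where w: "\<And>j. j < 2^k \<Longrightarrow> w j \<in> carrier_vec (2^k) \<and> V *\<^sub>v col E j = E *\<^sub>v w j"
    by metis
  define W where "W = mat_of_cols (2^k) (map w [0..<2^k])"
  have W: "W \<in> carrier_mat (2^k) (2^k)"
    using mat_of_cols_carrier(1)[of "2^k" "map w [0..<2^k]"] by (simp add: W_def)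
  have V_carrier: "V \<in> carrier_mat (2^n) (2^n)" using V by (rule logical_op_carrier)
  have "V * E = E * W"
  proof (rule mat_col_eqI)
    fix j assume "j < dim_col (E * W)"
    then have j: "j < 2^k" using W by simp
    have "col (V * E) j = V *\<^sub>v col E j" using col_mult2[OF V_carrier E j] .
    also have "\<dots> = E *\<^sub>v col W j" using j w[OF j] by (simp add: W_def)
    also have "\<dots> = col (E * W) j" using col_mult2[OF E W j] ..
    finally show "col (V * E) j = col (E * W) j" .
  qed (use V_carrier E W in simp_all)
  with W show thesis using that by blast
qed

lemma logical_action_eqI:
  assumes "code n k E" and V: "V \<in> carrier_mat (2^n) (2^n)"
    and W: "W \<in> carrier_mat (2^k) (2^k)" and VE: "V * E = E * W"
  shows "logical_action E V = W"
proof -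
  have E: "E \<in> carrier_mat (2^n) (2^k)" and EE: "dagger E * E = 1\<^sub>m (2^k)"
    using assms(1) by (simp_all add: code_def)
  have "logical_action E V = dagger E * (V * E)"
    using E V by (simp add: logical_action_def assoc_mult_mat[of _ "2^k" "2^n"])
  also have "\<dots> = (dagger E * E) * W"
    using E W by (simp add: VE assoc_mult_mat[of _ "2^k" "2^n"])
  finally show ?thesis using EE W by simp
qed

lemma logical_op_commutes_encoding:
  assumes C: "code n k E" and V: "logical_op n k E V"
  shows "V * E = E * logical_action E V"
proof -
  have "E \<in> carrier_mat (2^n) (2^k)" using C by (simp add: code_def)
  then obtain W where "W \<in> carrier_mat (2^k) (2^k)" and "V * E = E * W"
    using V by (rule logical_op_factor)
  moreover from this have "logical_action E V = W"
    using logical_action_eqI[OF C logical_op_carrier[OF V]] by blast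
  ultimately show ?thesis by simp
qed

lemma logical_action_carrier:
  assumes "E \<in> carrier_mat n k" and "V \<in> carrier_mat n n"
  shows "logical_action E V \<in> carrier_mat k k"
  unfolding logical_action_def using assms by (metis dagger_carrier mult_carrier_mat)

lemma logical_op_mult:
  assumes C: "code n k E" and LA: "logical_op n k E A" and LB: "logical_op n k E B"
  shows "logical_op n k E (B * A)"
proof -
  have E: "E \<in> carrier_mat (2^n) (2^k)" using C by (simp add: code_def)
  have A: "A \<in> carrier_mat (2^n) (2^n)" and B: "B \<in> carrier_mat (2^n) (2^n)"
    using LA LB by (simp_all add: logical_op_carrier)
  have "\<exists>w'\<in>carrier_vec (2^k). (B * A) *\<^sub>v (E *\<^sub>v v) = E *\<^sub>v w'" if v: "v \<in> carrier_vec (2^k)" for v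
  proof -
    obtain w where w: "w \<in> carrier_vec (2^k)" "A *\<^sub>v (E *\<^sub>v v) = E *\<^sub>v w"
      using LA v by (auto simp: logical_op_def)
    obtain w' where w': "w' \<in> carrier_vec (2^k)" "B *\<^sub>v (E *\<^sub>v w) = E *\<^sub>v w'"
      using LB w(1) by (auto simp: logical_op_def)
    have "(B * A) *\<^sub>v (E *\<^sub>v v) = B *\<^sub>v (A *\<^sub>v (E *\<^sub>v v))" using A B E v by simp
    with w w' show ?thesis by auto
  qed
  moreover have "unitary_mat (2^n) (B * A)"
    using LA LB unitary_mat_mult by (simp add: logical_op_def)
  ultimately show ?thesis by (simp add: logical_op_def)
qed

lemma logical_action_mult:
  assumes C: "code n k E" and LA: "logical_op n k E A" and LB: "logical_op n k E B"
  shows "logical_action E (B * A) = logical_action E B * logical_action E A"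
proof (rule logical_action_eqI[OF C])
  have E: "E \<in> carrier_mat (2^n) (2^k)" using C by (simp add: code_def)
  have A: "A \<in> carrier_mat (2^n) (2^n)" and B: "B \<in> carrier_mat (2^n) (2^n)"
    using LA LB by (simp_all add: logical_op_carrier)
  have LA': "logical_action E A \<in> carrier_mat (2^k) (2^k)"
    and LB': "logical_action E B \<in> carrier_mat (2^k) (2^k)"
    using E A B by (simp_all add: logical_action_carrier)
  show "B * A \<in> carrier_mat (2^n) (2^n)" using A B by simp
  show "logical_action E B * logical_action E A \<in> carrier_mat (2^k) (2^k)" using LA' LB' by simp
  have "(B * A) * E = B * (E * logical_action E A)"
    using assoc_mult_mat[OF B A E] logical_op_commutes_encoding[OF C LA] by simp
  also have "\<dots> = (E * logical_action E B) * logical_action E A"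
    using assoc_mult_mat[OF B E LA'] logical_op_commutes_encoding[OF C LB] by simp
  also have "\<dots> = E * (logical_action E B * logical_action E A)"
    using assoc_mult_mat[OF E LB' LA'] .
  finally show "(B * A) * E = E * (logical_action E B * logical_action E A)" .
qed

lemma finite_tuples: "finite {t. tuple k p t}"
  by (rule finite_subset[OF _ finite_lists_length_eq[of "{..<k}" p]]) (auto simp: tuple_def)

lemma pairwise_disjoint_tuplesD:
  "pairwise_disjoint_tuples I \<Longrightarrow> s \<in> I \<Longrightarrow> t \<in> I \<Longrightarrow> s \<noteq> t \<Longrightarrow> set s \<inter> set t = {}"
  by (simp add: pairwise_disjoint_tuples_def)

lemma pairwise_disjoint_tuples_subset:
  "pairwise_disjoint_tuples I \<Longrightarrow> J \<subseteq> I \<Longrightarrow> pairwise_disjoint_tuples J"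
  by (auto simp: pairwise_disjoint_tuples_def)

lemma addressable_imp_apply_on_realised:
  assumes ad: "addressable n k E F p U" and F: "closed_comp F" and C: "code n k E"
    and "finite I" and "I \<noteq> {}" and "\<forall>t\<in>I. tuple k p t" and "pairwise_disjoint_tuples I"
  shows "\<exists>V\<in>F. logical_op n k E V \<and> logical_action E V = apply_on k I U"
  using assms(4-)
proof (induction I rule: finite_ne_induct)
  case (singleton t)
  then show ?case using ad by (simp add: addressable_def)
next
  case (insert t I)
  have "pairwise_disjoint_tuples I"
    using insert.prems(2) by (rule pairwise_disjoint_tuples_subset) blast
  then obtain V where V: "V \<in> F" "logical_op n k E V" "logical_action E V = apply_on k I U"
    using insert.IH insert.prems(1) by blast
  obtain W where W: "W \<in> F" "logical_op n k E W" "logical_action E W = apply_on k {t} U"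
    using ad insert.prems(1) unfolding addressable_def by blast
  have "apply_on k {t} U * apply_on k I U = apply_on k ({t} \<union> I) U"
  proof (rule apply_on_mult)
    have "set t \<inter> set s = {}" if "s \<in> I" for s
      using that \<open>t \<notin> I\<close> by (intro pairwise_disjoint_tuplesD[OF insert.prems(2)]) auto
    then show "\<Union>(set ` {t}) \<inter> \<Union>(set ` I) = {}" by blast
    show "\<Union>(set ` {t}) \<subseteq> {..<k}" "\<Union>(set ` I) \<subseteq> {..<k}"
      using insert.prems by (auto simp: tuple_def)
  qed (use insert.hyps in auto)
  then have "logical_action E (W * V) = apply_on k (insert t I) U"
    using logical_action_mult[OF C V(2) W(2)] V(3) W(3) by simp
  moreover have "W * V \<in> F" using F V(1) W(1) by (simp add: closed_comp_def)
  ultimately show ?case using logical_op_mult[OF C V(2) W(2)] by blast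
qed

theorem lemma1:
  fixes n k p :: nat and E U :: "complex mat" and F :: "complex mat set"
  assumes "unitary_mat (2^p) U"
    and "code n k E"
    and "\<forall>V\<in>F. V \<in> carrier_mat (2^n) (2^n)"
    and "closed_comp F"
  shows "addressable n k E F p U \<longleftrightarrow> parallel_addressable n k E F p U"
proof
  assume ad: "addressable n k E F p U"
  show "parallel_addressable n k E F p U"
    unfolding parallel_addressable_def
  proof (intro allI impI, elim conjE)
    fix I assume "I \<noteq> {}" and tuples: "\<forall>t\<in>I. tuple k p t" and "pairwise_disjoint_tuples I"
    moreover have "finite I"
      using tuples by (intro finite_subset[OF _ finite_tuples[of k p]]) blast
    ultimately show "\<exists>V\<in>F. logical_op n k E V \<and> logical_action E V = apply_on k I U"
      using addressable_imp_apply_on_realised[OF ad assms(4,2)] by blast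
  qed
next
  assume pa: "parallel_addressable n k E F p U"
  show "addressable n k E F p U"
    unfolding addressable_def
  proof (intro allI impI)
    fix t assume "tuple k p t"
    moreover have "pairwise_disjoint_tuples {t}" by (simp add: pairwise_disjoint_tuples_def)
    ultimately show "\<exists>V\<in>F. logical_op n k E V \<and> logical_action E V = apply_on k {t} U"
      using pa unfolding parallel_addressable_def by blast
  qed
qed

end
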